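(* Let $G$ be a simple directed graph and $W$ a CTLN with graph $G$ (legal parameters, nondegenerate). Suppose $\sigma$ is a permitted motif with $\sigma=\tau\cup\{k\}$, $k\notin\tau$, where $\tau$ has uniform in-degree $d$ and the in-degree of $k$ in $G|_\sigma$ satisfies $d^{in}_k\le d$. Then $\operatorname{idx}(\sigma)=-\operatorname{idx}(\tau)$.
   Context: Legal parameters: $\delta>0$, $0<\varepsilon<\frac{\delta}{\delta+1}$. $W=W(G,\varepsilon,\delta)$ has $W_{ii}=0$, $W_{ij}=-1+\varepsilon$ if $j\to i$, $W_{ij}=-1-\delta$ if $i\ne j$, $j\not\to i$; dynamics $\dot x_i=-x_i+[\sum_jW_{ij}x_j+\theta]_+$, $\theta>0$; nondegenerate: $\det(I-W_\rho)\ne0$ and all Cramer determinants for $(I-W_\rho)x=\theta1_\rho$ nonzero for all $\rho$. $W_\rho$ is the principal submatrix on $\rho$. $\sigma$ is a permitted motif if $\theta(I-W_\sigma)^{-1}1_\sigma$ has all entries positive. $\tau$ has uniform in-degree $d$ if every node of $\tau$ has in-degree $d$ in $G|_\tau$. $\operatorname{idx}(\rho)=\operatorname{sgn}\det(I-W_\rho)$. *)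

theory Defs
  imports "Jordan_Normal_Form.Determinant" "Jordan_Normal_Form.DL_Submatrix"
    "Jordan_Normal_Form.Gauss_Jordan_Elimination"
begin

text \<open>Vertices of G are 0,...,n-1. E j i means the edge j -> i.
  G is a simple directed graph: no self loops (E i i false).\<close>

definition simple_digraph :: "nat \<Rightarrow> (nat \<Rightarrow> nat \<Rightarrow> bool) \<Rightarrow> bool" where
  "simple_digraph n E \<longleftrightarrow> (\<forall>i<n. \<not> E i i)"

definition legal_params :: "real \<Rightarrow> real \<Rightarrow> bool" where
  "legal_params \<epsilon> \<delta> \<longleftrightarrow> \<delta> > 0 \<and> 0 < \<epsilon> \<and> \<epsilon> < \<delta> / (\<delta> + 1)"

definition ctln_W :: "nat \<Rightarrow> (nat \<Rightarrow> nat \<Rightarrow> bool) \<Rightarrow> real \<Rightarrow> real \<Rightarrow> real mat" where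
  "ctln_W n E \<epsilon> \<delta> = mat n n (\<lambda>(i,j). if i = j then 0
      else if E j i then -1 + \<epsilon> else -1 - \<delta>)"

definition IW :: "real mat \<Rightarrow> nat set \<Rightarrow> real mat" where
  "IW W \<rho> = 1\<^sub>m (card {i. i < dim_row W \<and> i \<in> \<rho>}) - submatrix W \<rho> \<rho>"

definition theta_vec :: "real \<Rightarrow> real mat \<Rightarrow> nat set \<Rightarrow> real vec" where
  "theta_vec \<theta> W \<rho> = vec (card {i. i < dim_row W \<and> i \<in> \<rho>}) (\<lambda>_. \<theta>)"

definition nondegenerate :: "real mat \<Rightarrow> real \<Rightarrow> bool" where
  "nondegenerate W \<theta> \<longleftrightarrow> (\<forall>\<rho> \<subseteq> {..<dim_row W}.
     det (IW W \<rho>) \<noteq> 0 \<and>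
     (\<forall>i < card \<rho>. det (replace_col (IW W \<rho>) (theta_vec \<theta> W \<rho>) i) \<noteq> 0))"

definition permitted_motif :: "real mat \<Rightarrow> real \<Rightarrow> nat set \<Rightarrow> bool" where
  "permitted_motif W \<theta> \<sigma> \<longleftrightarrow>
     (case mat_inverse (IW W \<sigma>) of
        None \<Rightarrow> False
      | Some B \<Rightarrow> (\<forall>i < card \<sigma>. (B *\<^sub>v theta_vec \<theta> W \<sigma>) $ i > 0))"

definition in_deg :: "(nat \<Rightarrow> nat \<Rightarrow> bool) \<Rightarrow> nat set \<Rightarrow> nat \<Rightarrow> nat" where
  "in_deg E \<tau> i = card {j \<in> \<tau>. E j i}"

definition uniform_in_degree :: "(nat \<Rightarrow> nat \<Rightarrow> bool) \<Rightarrow> nat set \<Rightarrow> nat \<Rightarrow> bool" where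
  "uniform_in_degree E \<tau> d \<longleftrightarrow> (\<forall>i \<in> \<tau>. in_deg E \<tau> i = d)"

definition idx :: "real mat \<Rightarrow> nat set \<Rightarrow> real" where
  "idx W \<rho> = sgn (det (IW W \<rho>))"

end

theory Submission
  imports Defs
begin

(* Let A = I - W_sigma and let v be the indicator vector of tau inside sigma. Since tau has uniform
   in-degree d, every row of A indexed by tau sums over the columns tau to the same r > 0, while the
   row of k sums to some s > r, because k has in-degree at most d and no self-loop. Hence
   A v = r 1 + (s - r) e_k. Multiplying by adj A = det A * A^-1 and reading off coordinate k,
   where v vanishes, gives 0 = r det A (A^-1 1)_k + (s - r) det (I - W_tau). Since sigma is
   permitted, (A^-1 1)_k > 0, so det A and det (I - W_tau) have opposite signs. *)

lemma inj_on_pick: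
  assumes "finite S"
  shows "inj_on (pick S) {..<card S}"
proof (rule inj_onI)
  fix a b assume "a \<in> {..<card S}" "b \<in> {..<card S}" "pick S a = pick S b"
  then show "a = b"
    using pick_mono[of a S b] pick_mono[of b S a] by (cases a b rule: linorder_cases) auto
qed

lemma bij_betw_pick:
  assumes "finite S"
  shows "bij_betw (pick S) {..<card S} S"
proof -
  have "pick S ` {..<card S} \<subseteq> S" using pick_in_set by auto
  moreover have "card (pick S ` {..<card S}) = card S"
    using card_image[OF inj_on_pick[OF assms]] by simp
  ultimately have "pick S ` {..<card S} = S" using card_subset_eq[OF assms] by blast
  then show ?thesis using inj_on_pick[OF assms] by (simp add: bij_betw_def)
qed

lemma sum_pick:
  assumes "finite S"
  shows "(\<Sum>a<card S. f (pick S a)) = (\<Sum>u\<in>S. f u)"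
  using sum.reindex_bij_betw[OF bij_betw_pick[OF assms]] .

lemma pick_insert_insert_index:
  assumes fin: "finite \<tau>" and k: "k \<notin> \<tau>" and a: "a < card \<tau>"
  shows "pick (insert k \<tau>) (insert_index (card {x \<in> \<tau>. x < k}) a) = pick \<tau> a"
proof -
  define q where "q = pick \<tau> a"
  have q: "q \<in> \<tau>" "card {x \<in> \<tau>. x < q} = a"
    using pick_in_set card_pick a unfolding q_def by auto
  have pick_q: "pick (insert k \<tau>) (card {x \<in> insert k \<tau>. x < q}) = q"
    using q(1) by (intro pick_card_in_set) auto
  show ?thesis
  proof (cases "k < q")
    case True
    have sub: "{x \<in> \<tau>. x < k} \<subseteq> {x \<in> \<tau>. x < q}" using True by auto
    have "{x \<in> insert k \<tau>. x < q} = insert k {x \<in> \<tau>. x < q}" using True by auto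
    then have "card {x \<in> insert k \<tau>. x < q} = Suc a" using q(2) k fin by simp
    moreover have "card {x \<in> \<tau>. x < k} \<le> a" using card_mono[OF _ sub] fin q(2) by simp
    ultimately show ?thesis using pick_q q_def by simp
  next
    case False
    then have "q < k" using q(1) k by (cases q k rule: linorder_cases) auto
    then have "{x \<in> insert k \<tau>. x < q} = {x \<in> \<tau>. x < q}"
      and "{x \<in> \<tau>. x < q} \<subset> {x \<in> \<tau>. x < k}" using q(1) by auto
    moreover from this(2) have "a < card {x \<in> \<tau>. x < k}"
      using q(2) fin psubset_card_mono[of "{x \<in> \<tau>. x < k}"] by auto
    ultimately show ?thesis using pick_q q by (simp add: q_def)
  qed
qed

lemma IW_alt:
  assumes "W \<in> carrier_mat n n" "\<rho> \<subseteq> {..<n}"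
  shows "IW W \<rho> = 1\<^sub>m (card \<rho>) - submatrix W \<rho> \<rho>"
    and "dim_row (submatrix W \<rho> \<rho>) = card \<rho>" "dim_col (submatrix W \<rho> \<rho>) = card \<rho>"
proof -
  have "{i. i < n \<and> i \<in> \<rho>} = \<rho>" using assms by auto
  then show "IW W \<rho> = 1\<^sub>m (card \<rho>) - submatrix W \<rho> \<rho>"
    "dim_row (submatrix W \<rho> \<rho>) = card \<rho>" "dim_col (submatrix W \<rho> \<rho>) = card \<rho>"
    using assms(1) by (simp_all add: IW_def dim_submatrix)
qed

lemma IW_carrier:
  assumes "W \<in> carrier_mat n n" "\<rho> \<subseteq> {..<n}"
  shows "IW W \<rho> \<in> carrier_mat (card \<rho>) (card \<rho>)"
  unfolding IW_alt(1)[OF assms] using IW_alt(2,3)[OF assms] by (intro minus_carrier_mat carrier_matI) auto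

lemma IW_index:
  assumes W: "W \<in> carrier_mat n n" and \<rho>: "\<rho> \<subseteq> {..<n}" and ab: "a < card \<rho>" "b < card \<rho>"
  shows "IW W \<rho> $$ (a, b) = (if a = b then 1 else 0) - W $$ (pick \<rho> a, pick \<rho> b)"
proof -
  have "IW W \<rho> $$ (a, b) = 1\<^sub>m (card \<rho>) $$ (a, b) - submatrix W \<rho> \<rho> $$ (a, b)"
    unfolding IW_alt(1)[OF W \<rho>] using ab IW_alt(2,3)[OF W \<rho>] by (intro index_minus_mat) auto
  also have "\<dots> = (if a = b then 1 else 0) - W $$ (pick \<rho> a, pick \<rho> b)"
    using ab IW_alt(2,3)[OF W \<rho>] by (auto simp: submatrix_def)
  finally show ?thesis .
qed

(* p is the position of k in insert k tau, i.e. pick (insert k tau) p = k. *)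
lemma cofactor_IW_insert:
  assumes W: "W \<in> carrier_mat n n" and \<sigma>: "insert k \<tau> \<subseteq> {..<n}" and k: "k \<notin> \<tau>"
    and p: "p = card {x \<in> \<tau>. x < k}"
  shows "cofactor (IW W (insert k \<tau>)) p p = det (IW W \<tau>)"
proof -
  let ?A = "IW W (insert k \<tau>)"
  have \<tau>: "\<tau> \<subseteq> {..<n}" and fin: "finite \<tau>" using \<sigma> finite_subset by auto
  have A: "?A \<in> carrier_mat (Suc (card \<tau>)) (Suc (card \<tau>))"
    using IW_carrier[OF W \<sigma>] fin k by simp
  have "p \<le> card \<tau>" unfolding p using fin by (intro card_mono) auto
  then have p_lt: "p < Suc (card \<tau>)" by simp
  have "mat_delete ?A p p = IW W \<tau>"
  proof (rule eq_matI)
    fix a b assume "a < dim_row (IW W \<tau>)" "b < dim_col (IW W \<tau>)"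
    then have ab: "a < card \<tau>" "b < card \<tau>" using IW_carrier[OF W \<tau>] by auto
    have ia: "insert_index p a < card (insert k \<tau>)" "insert_index p b < card (insert k \<tau>)"
      using ab fin k by (auto simp: insert_index_def)
    have "mat_delete ?A p p $$ (a, b) = ?A $$ (insert_index p a, insert_index p b)"
      using mat_delete_index[OF A p_lt p_lt ab] by simp
    also have "\<dots> = (if insert_index p a = insert_index p b then 1 else 0)
        - W $$ (pick \<tau> a, pick \<tau> b)"
      using IW_index[OF W \<sigma> ia] pick_insert_insert_index[OF fin k] ab unfolding p by simp
    also have "\<dots> = (if a = b then 1 else 0) - W $$ (pick \<tau> a, pick \<tau> b)"
      by (simp add: insert_index_def)
    also have "\<dots> = IW W \<tau> $$ (a, b)"
      using IW_index[OF W \<tau> ab] by simp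
    finally show "mat_delete ?A p p $$ (a, b) = IW W \<tau> $$ (a, b)" .
  qed (use A IW_carrier[OF W \<tau>] in auto)
  then show ?thesis by (simp add: cofactor_def)
qed

lemma adj_mat_eq_det_smult_inverse:
  assumes A: "A \<in> carrier_mat m m" and B: "mat_inverse A = Some B"
  shows "adj_mat A = det A \<cdot>\<^sub>m B"
proof -
  have AB: "A * B = 1\<^sub>m m" and B_carrier: "B \<in> carrier_mat m m"
    using mat_inverse(2)[OF A B] by auto
  have adj: "adj_mat A \<in> carrier_mat m m" "adj_mat A * A = det A \<cdot>\<^sub>m 1\<^sub>m m"
    using adj_mat[OF A] by auto
  have "adj_mat A = adj_mat A * (A * B)" using AB adj by simp
  also have "\<dots> = (det A \<cdot>\<^sub>m 1\<^sub>m m) * B"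
    using adj A B_carrier by (simp add: assoc_mult_mat[symmetric])
  also have "\<dots> = det A \<cdot>\<^sub>m B"
    using B_carrier mult_smult_assoc_mat[of "1\<^sub>m m" m m B m "det A"] by simp
  finally show ?thesis .
qed

lemma cofactor_relation_of_mult_vec:
  fixes A :: "real mat"
  assumes A: "A \<in> carrier_mat m m" and B: "mat_inverse A = Some B" and p: "p < m"
    and v: "v \<in> carrier_vec m" "v $ p = 0"
    and Av: "A *\<^sub>v v = r \<cdot>\<^sub>v vec m (\<lambda>_. 1) + t \<cdot>\<^sub>v unit_vec m p"
  shows "r * det A * (B *\<^sub>v vec m (\<lambda>_. 1)) $ p + t * cofactor A p p = 0"
proof -
  define C where "C = adj_mat A"
  have C: "C \<in> carrier_mat m m" "C * A = det A \<cdot>\<^sub>m 1\<^sub>m m"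
    using adj_mat[OF A] unfolding C_def by auto
  have B_carrier: "B \<in> carrier_mat m m" using mat_inverse(2)[OF A B] by auto
  have "C *\<^sub>v (A *\<^sub>v v) = (C * A) *\<^sub>v v" by (rule assoc_mult_mat_vec[OF C(1) A v(1), symmetric])
  also have "\<dots> = det A \<cdot>\<^sub>v v" using v(1) by (auto simp: C(2))
  finally have "(C *\<^sub>v (A *\<^sub>v v)) $ p = 0" using v p by simp
  moreover have "(C *\<^sub>v (A *\<^sub>v v)) $ p
      = r * det A * (B *\<^sub>v vec m (\<lambda>_. 1)) $ p + t * cofactor A p p"
  proof -
    have "C *\<^sub>v (A *\<^sub>v v) = r \<cdot>\<^sub>v (C *\<^sub>v vec m (\<lambda>_. 1)) + t \<cdot>\<^sub>v (C *\<^sub>v unit_vec m p)"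
      unfolding Av using C by (simp add: mult_add_distrib_mat_vec[of C m m] mult_mat_vec[of C m m])
    moreover have "C *\<^sub>v vec m (\<lambda>_. 1) = det A \<cdot>\<^sub>v (B *\<^sub>v vec m (\<lambda>_. 1))"
      unfolding C_def adj_mat_eq_det_smult_inverse[OF A B] using B_carrier
      by (intro eq_vecI) (auto simp: scalar_prod_def sum_distrib_left mult.assoc)
    moreover have "(C *\<^sub>v unit_vec m p) $ p = cofactor A p p"
      using C p A by (simp add: C_def adj_mat_def)
    ultimately show ?thesis using C B_carrier p by simp
  qed
  ultimately show ?thesis by simp
qed

lemma sgn_det_eq_neg_sgn_cofactor:
  fixes A :: "real mat"
  assumes A: "A \<in> carrier_mat m m" and B: "mat_inverse A = Some B" and p: "p < m"
    and v: "v \<in> carrier_vec m" "v $ p = 0"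
    and Av: "A *\<^sub>v v = r \<cdot>\<^sub>v vec m (\<lambda>_. 1) + t \<cdot>\<^sub>v unit_vec m p"
    and pos: "r > 0" "t > 0" "(B *\<^sub>v vec m (\<lambda>_. 1)) $ p > 0"
  shows "sgn (det A) = - sgn (cofactor A p p)"
proof -
  define c where "c = r * (B *\<^sub>v vec m (\<lambda>_. 1)) $ p / t"
  have "cofactor A p p = - c * det A"
    using cofactor_relation_of_mult_vec[OF A B p v Av] pos unfolding c_def
    by (simp add: field_simps)
  moreover have "c > 0" using pos unfolding c_def by simp
  ultimately show ?thesis by (simp add: sgn_mult)
qed

definition IW_row_sum :: "real mat \<Rightarrow> nat set \<Rightarrow> nat \<Rightarrow> real" where
  "IW_row_sum W \<tau> x = (\<Sum>u\<in>\<tau>. (if u = x then 1 else 0) - W $$ (x, u))"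

lemma IW_mult_indicator_index:
  assumes W: "W \<in> carrier_mat n n" and \<sigma>: "\<sigma> \<subseteq> {..<n}" and "\<tau> \<subseteq> \<sigma>" and a: "a < card \<sigma>"
  shows "(IW W \<sigma> *\<^sub>v vec (card \<sigma>) (\<lambda>b. if pick \<sigma> b \<in> \<tau> then 1 else 0)) $ a
    = IW_row_sum W \<tau> (pick \<sigma> a)"
proof -
  have fin: "finite \<sigma>" using \<sigma> finite_subset by blast
  define g where "g u = ((if u = pick \<sigma> a then 1 else 0) - W $$ (pick \<sigma> a, u))
    * (if u \<in> \<tau> then 1 else 0)" for u
  have "(IW W \<sigma> *\<^sub>v vec (card \<sigma>) (\<lambda>b. if pick \<sigma> b \<in> \<tau> then 1 else 0)) $ a
      = (\<Sum>b<card \<sigma>. IW W \<sigma> $$ (a, b) * (if pick \<sigma> b \<in> \<tau> then 1 else 0))"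
    using a IW_carrier[OF W \<sigma>] by (simp add: scalar_prod_def row_def atLeast0LessThan)
  also have "\<dots> = (\<Sum>b<card \<sigma>. g (pick \<sigma> b))"
    using a inj_on_pick[OF fin] unfolding g_def
    by (intro sum.cong) (auto simp: IW_index[OF W \<sigma>] inj_on_def)
  also have "\<dots> = (\<Sum>u\<in>\<sigma>. g u)" by (rule sum_pick[OF fin])
  also have "\<dots> = (\<Sum>u\<in>\<tau>. g u)"
    by (rule sum.mono_neutral_right[OF fin \<open>\<tau> \<subseteq> \<sigma>\<close>]) (simp add: g_def)
  also have "\<dots> = IW_row_sum W \<tau> (pick \<sigma> a)" unfolding g_def IW_row_sum_def by simp
  finally show ?thesis .
qed

lemma sgn_det_IW_insert:
  assumes W: "W \<in> carrier_mat n n" and \<sigma>: "insert k \<tau> \<subseteq> {..<n}" and k: "k \<notin> \<tau>"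
    and B: "mat_inverse (IW W (insert k \<tau>)) = Some B"
    and B_pos: "\<forall>i < card (insert k \<tau>). (B *\<^sub>v vec (card (insert k \<tau>)) (\<lambda>_. 1)) $ i > 0"
    and rows: "\<forall>x\<in>\<tau>. IW_row_sum W \<tau> x = r" and r: "r > 0"
    and row_k: "IW_row_sum W \<tau> k > r"
  shows "sgn (det (IW W (insert k \<tau>))) = - sgn (det (IW W \<tau>))"
proof -
  let ?\<sigma> = "insert k \<tau>"
  define m where "m = card ?\<sigma>"
  define p where "p = card {x \<in> \<tau>. x < k}"
  define v where "v = vec m (\<lambda>b. if pick ?\<sigma> b \<in> \<tau> then 1 else (0::real))"
  have fin: "finite ?\<sigma>" using finite_subset[OF \<sigma>] by simp
  have "{x \<in> ?\<sigma>. x < k} = {x \<in> \<tau>. x < k}" by auto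
  then have pick_p: "pick ?\<sigma> p = k" using pick_card_in_set[of k ?\<sigma>] unfolding p_def by simp
  have "{x \<in> \<tau>. x < k} \<subset> ?\<sigma>" by auto
  then have p: "p < m" unfolding p_def m_def using fin psubset_card_mono by blast
  have A: "IW W ?\<sigma> \<in> carrier_mat m m" unfolding m_def by (rule IW_carrier[OF W \<sigma>])
  have "IW W ?\<sigma> *\<^sub>v v = r \<cdot>\<^sub>v vec m (\<lambda>_. 1) + (IW_row_sum W \<tau> k - r) \<cdot>\<^sub>v unit_vec m p"
  proof (rule eq_vecI)
    fix i assume "i < dim_vec (r \<cdot>\<^sub>v vec m (\<lambda>_. 1) + (IW_row_sum W \<tau> k - r) \<cdot>\<^sub>v unit_vec m p)"
    then have i: "i < m" by simp
    have row_i: "(IW W ?\<sigma> *\<^sub>v v) $ i = IW_row_sum W \<tau> (pick ?\<sigma> i)"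
      using IW_mult_indicator_index[OF W \<sigma> subset_insertI, of i] i unfolding v_def m_def by simp
    show "(IW W ?\<sigma> *\<^sub>v v) $ i
        = (r \<cdot>\<^sub>v vec m (\<lambda>_. 1) + (IW_row_sum W \<tau> k - r) \<cdot>\<^sub>v unit_vec m p) $ i"
    proof (cases "i = p")
      case True
      then show ?thesis using row_i pick_p p by simp
    next
      case False
      then have "pick ?\<sigma> i \<in> \<tau>"
        using pick_in_set[of i ?\<sigma>] inj_on_pick[OF fin] i p pick_p
        unfolding m_def inj_on_def by (metis insertE lessThan_iff)
      then show ?thesis using row_i rows False i p by simp
    qed
  qed (use A in \<open>simp add: v_def\<close>)
  moreover have "v \<in> carrier_vec m" "v $ p = 0" using p pick_p k by (auto simp: v_def)
  ultimately have "sgn (det (IW W ?\<sigma>)) = - sgn (cofactor (IW W ?\<sigma>) p p)"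
    using sgn_det_eq_neg_sgn_cofactor[OF A B[folded m_def] p] r row_k B_pos p
    unfolding m_def by simp
  then show ?thesis using cofactor_IW_insert[OF W \<sigma> k p_def] by simp
qed

lemma ctln_W_carrier: "ctln_W n E \<epsilon> \<delta> \<in> carrier_mat n n"
  by (simp add: ctln_W_def)

lemma IW_row_sum_ctln_W:
  assumes E: "simple_digraph n E" and \<tau>: "\<tau> \<subseteq> {..<n}" and x: "x < n"
  shows "IW_row_sum (ctln_W n E \<epsilon> \<delta>) \<tau> x
    = (1 + \<delta>) * card \<tau> - (\<epsilon> + \<delta>) * in_deg E \<tau> x - (if x \<in> \<tau> then \<delta> else 0)"
proof -
  have fin: "finite \<tau>" using finite_subset[OF \<tau>] by simp
  have "IW_row_sum (ctln_W n E \<epsilon> \<delta>) \<tau> x = (\<Sum>u\<in>\<tau>. (1 + \<delta>)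
      - (\<epsilon> + \<delta>) * (if E u x then 1 else 0) - \<delta> * (if u = x then 1 else 0))"
    unfolding IW_row_sum_def using E \<tau> x
    by (intro sum.cong) (auto simp: ctln_W_def simple_digraph_def)
  also have "\<dots> = (1 + \<delta>) * card \<tau> - (\<epsilon> + \<delta>) * in_deg E \<tau> x - (if x \<in> \<tau> then \<delta> else 0)"
    using fin by (simp add: sum_subtractf sum_distrib_left[symmetric] sum.inter_filter[symmetric]
        in_deg_def)
  finally show ?thesis .
qed

lemma IW_row_sum_ctln_W_pos:
  assumes "legal_params \<epsilon> \<delta>" and \<tau>: "\<tau> \<subseteq> {..<n}" "\<tau> \<noteq> {}" and x: "x < n"
  shows "IW_row_sum (ctln_W n E \<epsilon> \<delta>) \<tau> x > 0"
proof -
  have "\<delta> / (\<delta> + 1) < 1" "\<delta> > 0" "\<epsilon> > 0" "\<epsilon> < \<delta> / (\<delta> + 1)"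
    using assms(1) by (auto simp: legal_params_def)
  then have "\<epsilon> < 1" "\<delta> > 0" by linarith+
  then have "(if u = x then 1 else 0) - ctln_W n E \<epsilon> \<delta> $$ (x, u) > 0" if "u \<in> \<tau>" for u
  proof -
    have "u < n" using that \<tau>(1) by auto
    then show ?thesis using \<open>\<epsilon> < 1\<close> \<open>\<delta> > 0\<close> x by (auto simp: ctln_W_def)
  qed
  then show ?thesis
    unfolding IW_row_sum_def using finite_subset[OF \<tau>(1)] \<tau>(2) by (intro sum_pos) auto
qed

lemma permitted_motif_inverse_pos:
  assumes W: "W \<in> carrier_mat n n" and \<sigma>: "\<sigma> \<subseteq> {..<n}"
    and "permitted_motif W \<theta> \<sigma>" and "\<theta> > 0"
  obtains B where "mat_inverse (IW W \<sigma>) = Some B"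
    and "\<forall>i < card \<sigma>. (B *\<^sub>v vec (card \<sigma>) (\<lambda>_. 1)) $ i > 0"
proof -
  have "{i. i < dim_row W \<and> i \<in> \<sigma>} = \<sigma>" using W \<sigma> by auto
  then have theta: "theta_vec \<theta> W \<sigma> = \<theta> \<cdot>\<^sub>v vec (card \<sigma>) (\<lambda>_. 1)"
    unfolding theta_vec_def by (intro eq_vecI) auto
  obtain B where B: "mat_inverse (IW W \<sigma>) = Some B"
    and pos: "\<forall>i < card \<sigma>. (B *\<^sub>v theta_vec \<theta> W \<sigma>) $ i > 0"
    using assms(3) unfolding permitted_motif_def by (auto split: option.splits)
  have "B \<in> carrier_mat (card \<sigma>) (card \<sigma>)" using mat_inverse(2)[OF IW_carrier[OF W \<sigma>] B] by auto
  then have "(B *\<^sub>v theta_vec \<theta> W \<sigma>) $ i = \<theta> * (B *\<^sub>v vec (card \<sigma>) (\<lambda>_. 1)) $ i"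
    if "i < card \<sigma>" for i
    unfolding theta using that by (simp add: mult_mat_vec)
  then show ?thesis
    using that B pos \<open>\<theta> > 0\<close> by (simp add: zero_less_mult_iff)
qed

theorem lemma6:
  fixes n :: nat and E :: "nat \<Rightarrow> nat \<Rightarrow> bool" and \<epsilon> \<delta> \<theta> :: real
    and \<sigma> \<tau> :: "nat set" and k d :: nat
  assumes "simple_digraph n E"
    and "legal_params \<epsilon> \<delta>"
    and "\<theta> > 0"
    and "nondegenerate (ctln_W n E \<epsilon> \<delta>) \<theta>"
    and "\<sigma> \<subseteq> {..<n}"
    and "permitted_motif (ctln_W n E \<epsilon> \<delta>) \<theta> \<sigma>"
    and "\<sigma> = \<tau> \<union> {k}" and "k \<notin> \<tau>" and "\<tau> \<noteq> {}"
    and "uniform_in_degree E \<tau> d"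
    and "in_deg E \<sigma> k \<le> d"
  shows "idx (ctln_W n E \<epsilon> \<delta>) \<sigma> = - idx (ctln_W n E \<epsilon> \<delta>) \<tau>"
proof -
  let ?W = "ctln_W n E \<epsilon> \<delta>"
  have \<sigma>: "\<sigma> = insert k \<tau>" "insert k \<tau> \<subseteq> {..<n}" using assms(5,7) by auto
  then have \<tau>: "\<tau> \<subseteq> {..<n}" and k: "k < n" by auto
  obtain B where B: "mat_inverse (IW ?W (insert k \<tau>)) = Some B"
    and B_pos: "\<forall>i < card (insert k \<tau>). (B *\<^sub>v vec (card (insert k \<tau>)) (\<lambda>_. 1)) $ i > 0"
    by (rule permitted_motif_inverse_pos[OF ctln_W_carrier \<sigma>(2) assms(6)[unfolded \<sigma>(1)] assms(3)])
  define r where "r = (1 + \<delta>) * card \<tau> - (\<epsilon> + \<delta>) * d - \<delta>"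
  have rows: "\<forall>x\<in>\<tau>. IW_row_sum ?W \<tau> x = r"
    using IW_row_sum_ctln_W[OF assms(1) \<tau>] \<tau> assms(10)
    unfolding r_def uniform_in_degree_def by auto
  obtain x where "x \<in> \<tau>" using assms(9) by blast
  then have r_pos: "r > 0"
    using rows IW_row_sum_ctln_W_pos[OF assms(2) \<tau> assms(9), of x E] \<tau> by auto
  have "{j \<in> \<sigma>. E j k} = {j \<in> \<tau>. E j k}"
    using \<sigma>(1) assms(1) k by (auto simp: simple_digraph_def)
  then have "in_deg E \<tau> k \<le> d" using assms(11) by (simp add: in_deg_def)
  moreover have "\<epsilon> + \<delta> > 0" "\<delta> > 0" using assms(2) by (auto simp: legal_params_def)
  ultimately have "(\<epsilon> + \<delta>) * in_deg E \<tau> k \<le> (\<epsilon> + \<delta>) * d" "\<delta> > 0" by simp_all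
  then have row_k: "IW_row_sum ?W \<tau> k > r"
    unfolding IW_row_sum_ctln_W[OF assms(1) \<tau> k] r_def using assms(8) by simp
  show ?thesis
    using sgn_det_IW_insert[OF ctln_W_carrier \<sigma>(2) assms(8) B B_pos rows r_pos row_k]
    unfolding idx_def \<sigma>(1) .
qed

end
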